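(* Let $\Phi_E\subseteq\Phi$ be an isolated pseudo-Levi subsystem (the root system of an isolated pseudo-Levi subgroup $E\supseteq T$). Then for any Levi subsystem $\Psi$ of $\Phi_E$ there exists $t\in T$ such that $\Phi_t=\Psi$, where $\Phi_t=\{\alpha\in\Phi:\alpha(t)=1\}$.
   Context: $G$ is a connected reductive group over an algebraically closed field $k$ of positive very good characteristic, with simply connected derived subgroup, maximal torus $T$, root system $\Phi$ with respect to $T$ spanning a Euclidean space $V$, base $\Delta$ and Weyl group $W$. A Levi subsystem of a root system $\Psi'\subset V'$ is a subsystem of the form $\Psi'\cap U$ for a subspace $U$. For $\Phi$ irreducible with highest root $\theta$ and $\tilde\Delta=\Delta\sqcup\{-\theta\}$, a pseudo-Levi subsystem is one of the form $w\cdot\langle S\rangle$ with $w\in W$, $S\subseteq\tilde\Delta$, where $\langle S\rangle=\langle S\rangle_{\mathbb Z}\cap\Phi$ (extended componentwise to non-irreducible $\Phi$); it is isolated if it is not contained in a proper Levi subsystem of $\Phi$. A pseudo-Levi subgroup is $C_G(t)$ for semisimple $t\in G$; isolated if not contained in any proper Levi subgroup. *)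

theory Defs
  imports "HOL-Analysis.Analysis" "HOL-Computational_Algebra.Polynomial"
    "HOL-Combinatorics.Permutations"
begin

text \<open>Combinatorial model of (G, T): G is encoded by its root datum
 (X, Phi, Y, Phi-check) with X = Y = int^'n, the perfect pairing being the
 standard dot product.  The torus is T = Hom(X, k^*) = (k^*)^'n.\<close>

definition pair :: "int ^ 'n \<Rightarrow> int ^ 'n \<Rightarrow> int" where
  "pair x y = (\<Sum>i\<in>UNIV. x $ i * y $ i)"

definition refl_X :: "((int ^ 'n) \<Rightarrow> (int ^ 'n)) \<Rightarrow> int ^ 'n \<Rightarrow> int ^ 'n \<Rightarrow> int ^ 'n" where
  "refl_X cor a x = x - pair x (cor a) *s a"

definition refl_Y :: "((int ^ 'n) \<Rightarrow> (int ^ 'n)) \<Rightarrow> int ^ 'n \<Rightarrow> int ^ 'n \<Rightarrow> int ^ 'n" where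
  "refl_Y cor a y = y - pair a y *s cor a"

definition root_datum :: "(int ^ 'n) set \<Rightarrow> ((int ^ 'n) \<Rightarrow> (int ^ 'n)) \<Rightarrow> bool" where
  "root_datum R cor \<longleftrightarrow> finite R \<and> inj_on cor R \<and>
     (\<forall>a\<in>R. pair a (cor a) = 2) \<and>
     (\<forall>a\<in>R. \<forall>b\<in>R. refl_X cor a b \<in> R \<and> refl_Y cor a (cor b) \<in> cor ` R) \<and>
     (\<forall>a\<in>R. 2 *s a \<notin> R)"

definition int_span :: "(int ^ 'n) set \<Rightarrow> (int ^ 'n) set" where
  "int_span S = {v. \<exists>c. v = (\<Sum>a\<in>S. c a *s a)}"

text \<open>Derived subgroup simply connected: Y / Z Phi-check is torsion free.\<close>
definition sc_derived :: "(int ^ 'n) set \<Rightarrow> ((int ^ 'n) \<Rightarrow> (int ^ 'n)) \<Rightarrow> bool" where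
  "sc_derived R cor \<longleftrightarrow> (\<forall>y. \<forall>m::int. m \<noteq> 0 \<longrightarrow> m *s y \<in> int_span (cor ` R) \<longrightarrow> y \<in> int_span (cor ` R))"

definition int_lin_indep :: "(int ^ 'n) set \<Rightarrow> bool" where
  "int_lin_indep D \<longleftrightarrow> (\<forall>c. (\<Sum>d\<in>D. c d *s d) = 0 \<longrightarrow> (\<forall>d\<in>D. c d = 0))"

definition is_base :: "(int ^ 'n) set \<Rightarrow> (int ^ 'n) set \<Rightarrow> bool" where
  "is_base R D \<longleftrightarrow> D \<subseteq> R \<and> int_lin_indep D \<and>
     (\<forall>a\<in>R. \<exists>c. a = (\<Sum>d\<in>D. c d *s d) \<and> ((\<forall>d\<in>D. c d \<ge> 0) \<or> (\<forall>d\<in>D. c d \<le> 0)))"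

text \<open>p good: p divides no (nonzero) coefficient of a root w.r.t. a base
  (equivalently, no coefficient of the highest root of any component).\<close>
definition good_prime :: "(int ^ 'n) set \<Rightarrow> (int ^ 'n) set \<Rightarrow> nat \<Rightarrow> bool" where
  "good_prime R D p \<longleftrightarrow> (\<forall>a\<in>R. \<forall>c. a = (\<Sum>d\<in>D. c d *s d) \<longrightarrow>
       (\<forall>d\<in>D. c d \<noteq> 0 \<longrightarrow> \<not> int p dvd c d))"

definition cartan_det :: "(int ^ 'n) set \<Rightarrow> ((int ^ 'n) \<Rightarrow> (int ^ 'n)) \<Rightarrow> int" where
  "cartan_det D cor = (\<Sum>\<sigma> | \<sigma> permutes D. sign \<sigma> * (\<Prod>d\<in>D. pair (\<sigma> d) (cor d)))"

text \<open>p very good: good, and p does not divide the determinant of the Cartan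
  matrix (= index of the root lattice in the weight lattice), i.e. p does not
  divide n+1 for any component of type A_n.\<close>
definition very_good :: "(int ^ 'n) set \<Rightarrow> ((int ^ 'n) \<Rightarrow> (int ^ 'n)) \<Rightarrow> nat \<Rightarrow> bool" where
  "very_good R cor p \<longleftrightarrow> (\<exists>D. is_base R D \<and> good_prime R D p \<and> \<not> int p dvd cartan_det D cor)"

definition torus_elt :: "'k::field ^ 'n \<Rightarrow> bool" where
  "torus_elt t \<longleftrightarrow> (\<forall>i. t $ i \<noteq> 0)"

definition char_val :: "int ^ 'n \<Rightarrow> 'k::field ^ 'n \<Rightarrow> 'k" where
  "char_val a t = (\<Prod>i\<in>UNIV. (t $ i) powi (a $ i))"

definition Phi_t :: "(int ^ 'n) set \<Rightarrow> 'k::field ^ 'n \<Rightarrow> (int ^ 'n) set" where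
  "Phi_t R t = {a \<in> R. char_val a t = 1}"

definition to_real :: "int ^ 'n \<Rightarrow> real ^ 'n" where
  "to_real x = (\<chi> i. real_of_int (x $ i))"

definition levi_subsystem :: "(int ^ 'n) set \<Rightarrow> (int ^ 'n) set \<Rightarrow> bool" where
  "levi_subsystem Psi' Psi \<longleftrightarrow> (\<exists>U. subspace U \<and> Psi = {a \<in> Psi'. to_real a \<in> U})"

definition isolated :: "(int ^ 'n) set \<Rightarrow> (int ^ 'n) set \<Rightarrow> bool" where
  "isolated R S \<longleftrightarrow> \<not> (\<exists>L. levi_subsystem R L \<and> L \<noteq> R \<and> S \<subseteq> L)"

end

theory Submission
  imports Defs
begin

text \<open>
  Write \<open>Psi = Phi_s \<inter> U\<close>. As the roots are integral, a rational cocharacter, and after clearing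
  denominators an integral one, vanishes on \<open>Psi\<close> while pairing non-trivially with a given root
  of \<open>Phi_s - Psi\<close>; a generic integral combination \<open>mu\<close> of these handles all of \<open>Phi_s - Psi\<close>
  at once. Then \<open>t = s * mu(c)\<close> satisfies \<open>alpha(t) = alpha(s) * c powi pair alpha mu\<close>, so
  \<open>Phi_t = Psi\<close> as soon as \<open>c\<close> avoids the finitely many solutions of
  \<open>alpha(s) * c powi pair alpha mu = 1\<close> with \<open>pair alpha mu \<noteq> 0\<close>, which is possible because \<open>k\<close>
  is infinite.
\<close>

definition vec_map :: "('a \<Rightarrow> 'b) \<Rightarrow> 'a ^ 'n \<Rightarrow> 'b ^ 'n" where
  "vec_map f x = (\<chi> i. f (x $ i))"

definition cochar :: "int ^ 'n \<Rightarrow> 'k::field \<Rightarrow> 'k ^ 'n" where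
  "cochar mu c = (\<chi> i. c powi (mu $ i))"

lemma vec_map_of_rat_in_span:
  fixes S :: "(rat ^ 'n) set"
  assumes "x \<in> vec.span S"
  shows "vec_map (of_rat :: rat \<Rightarrow> 'a::field_char_0) x \<in> vec.span (vec_map of_rat ` S)"
  using assms
proof (induction rule: vec.span_induct_alt)
  case base
  have "vec_map (of_rat :: rat \<Rightarrow> 'a) (0 :: rat ^ 'n) = 0"
    by (simp add: vec_map_def vec_eq_iff)
  then show ?case by (simp add: vec.span_zero)
next
  case (step c x y)
  have "vec_map (of_rat :: rat \<Rightarrow> 'a) (c *s x + y) = of_rat c *s vec_map of_rat x + vec_map of_rat y"
    by (simp add: vec_map_def vec_eq_iff of_rat_add of_rat_mult)
  then show ?case
    using step by (simp add: vec.span_add vec.span_scale vec.span_base)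
qed

lemma separating_functional:
  fixes a :: "'a::field ^ 'n"
  assumes "a \<notin> vec.span S"
  obtains lam :: "'a ^ 'n" where "\<forall>b\<in>S. (\<Sum>i\<in>UNIV. b $ i * lam $ i) = 0"
    and "(\<Sum>i\<in>UNIV. a $ i * lam $ i) \<noteq> 0"
proof -
  obtain B where B: "B \<subseteq> S" "vec.independent B" "S \<subseteq> vec.span B"
    using vec.maximal_independent_subset by blast
  then have a_B: "a \<notin> vec.span B"
    using assms vec.span_mono[OF B(1)] by blast
  then have "vec.independent (insert a B)"
    using B(2) vec.independent_insertI by blast
  then obtain g :: "'a ^ 'n \<Rightarrow> 'a ^ 'n" where g: "Vector_Spaces.linear (*s) (*s) g"
     "\<forall>x\<in>insert a B. g x = (if x = a then 1 else 0)"
    using vec.linear_independent_extend[of "insert a B" "\<lambda>x. if x = a then 1 else 0"] by blast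
  interpret g: Vector_Spaces.linear "(*s)" "(*s)" g by (rule g(1))
  fix j :: 'n
  define lam where "lam = (\<chi> i. g (axis i 1) $ j)"
  have g_j: "g x $ j = (\<Sum>i\<in>UNIV. x $ i * lam $ i)" for x
    unfolding lam_def vec_lambda_beta by (rule linear_componentwise[OF g(1)])
  have S_zero: "g b = 0" if "b \<in> S" for b
  proof (rule g.eq_0_on_span)
    show "b \<in> vec.span B" using that B(3) by blast
    show "g x = 0" if "x \<in> B" for x
      using that g(2) a_B vec.span_base by fastforce
  qed
  have "g a $ j = 1"
    using g(2) by simp
  show thesis
  proof (rule that)
    show "\<forall>b\<in>S. (\<Sum>i\<in>UNIV. b $ i * lam $ i) = 0"
      using S_zero by (auto simp flip: g_j)
    show "(\<Sum>i\<in>UNIV. a $ i * lam $ i) \<noteq> 0"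
      using \<open>g a $ j = 1\<close> by (simp flip: g_j)
  qed
qed

lemma rat_vec_clear_denominators:
  fixes lam :: "rat ^ 'n"
  obtains d :: int and mu :: "int ^ 'n" where "d > 0" and "vec_map of_int mu = of_int d *s lam"
proof -
  define d where "d = (\<Prod>i\<in>UNIV. snd (quotient_of (lam $ i)))"
  have "d > 0"
    unfolding d_def by (rule prod_pos) (simp add: quotient_of_denom_pos')
  moreover have "\<exists>m::int. of_int d * lam $ i = of_int m" for i
  proof -
    obtain p q where pq: "quotient_of (lam $ i) = (p, q)" by fastforce
    have "q dvd d"
      unfolding d_def using pq dvd_prodI[of UNIV i "\<lambda>i. snd (quotient_of (lam $ i))"] by simp
    then obtain e where "d = q * e" by blast
    then have "of_int d * lam $ i = of_int (e * p)"
      using quotient_of_div[OF pq] quotient_of_denom_pos[OF pq] by simp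
    then show ?thesis by blast
  qed
  then obtain m where "\<And>i. of_int d * lam $ i = of_int (m i)" by metis
  ultimately show thesis
    using that[of d "\<chi> i. m i"] by (simp add: vec_map_def vec_eq_iff)
qed

lemma separating_cocharacter:
  fixes P :: "(int ^ 'n) set"
  assumes "to_real a \<notin> span (to_real ` P)"
  obtains mu where "\<forall>b\<in>P. pair b mu = 0" and "pair a mu \<noteq> 0"
proof -
  have to_real_eq: "to_real = vec_map of_rat \<circ> vec_map (of_int :: int \<Rightarrow> rat)"
    by (simp add: fun_eq_iff to_real_def vec_map_def)
  have "vec_map of_int a \<notin> vec.span (vec_map (of_int :: int \<Rightarrow> rat) ` P)"
  proof
    assume "vec_map of_int a \<in> vec.span (vec_map (of_int :: int \<Rightarrow> rat) ` P)"
    then have "to_real a \<in> span (to_real ` P)"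
      using vec_map_of_rat_in_span[where 'a=real]
      unfolding to_real_eq image_comp[symmetric] comp_apply span_vec_eq by blast
    with assms show False by contradiction
  qed
  then obtain lam where lam_P: "\<forall>b\<in>P. (\<Sum>i\<in>UNIV. of_int (b $ i) * lam $ i) = 0"
    and lam_a: "(\<Sum>i\<in>UNIV. of_int (a $ i) * lam $ i) \<noteq> (0::rat)"
    by (rule separating_functional) (auto simp: vec_map_def)
  obtain d mu where "d > 0" and mu: "vec_map of_int mu = of_int d *s lam"
    by (rule rat_vec_clear_denominators)
  have "of_int (mu $ i) = of_int d * lam $ i" for i
    using arg_cong[OF mu, of "\<lambda>v. v $ i"] by (simp add: vec_map_def)
  then have pair_mu: "(of_int (pair x mu) :: rat) = of_int d * (\<Sum>i\<in>UNIV. of_int (x $ i) * lam $ i)" for x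
    by (simp add: pair_def sum_distrib_left mult_ac)
  show thesis
  proof
    show "\<forall>b\<in>P. pair b mu = 0"
      using pair_mu lam_P by (metis of_int_eq_0_iff mult_zero_right)
    show "pair a mu \<noteq> 0"
      using pair_mu[of a] lam_a \<open>d > 0\<close> by auto
  qed
qed

lemma pair_zero_right: "pair x 0 = 0"
  by (simp add: pair_def)

lemma pair_add_smult_right: "pair x (m + c *s n) = pair x m + c * pair x n"
  by (simp add: pair_def sum.distrib sum_distrib_left algebra_simps)

lemma finite_int_zeros_affine:
  fixes a b :: int
  assumes "a \<noteq> 0 \<or> b \<noteq> 0"
  shows "finite {M. a + M * b = 0}"
proof (cases "b = 0")
  case True
  then show ?thesis using assms by simp
next
  case False
  have "{M. a + M * b = 0} \<subseteq> {- a div b}"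
    using False by (auto simp: add_eq_0_iff2)
  then show ?thesis by (rule finite_subset) simp
qed

text \<open>
  Cocharacters separating single roots from \<open>P\<close> are combined into \<open>mu + M nu\<close>, where the integer
  \<open>M\<close> avoids the finitely many values at which some \<open>pair a (mu + M nu)\<close> vanishes.
\<close>
lemma common_separating_cocharacter:
  fixes P :: "(int ^ 'n) set"
  assumes "finite A"
    and "\<forall>a\<in>A. \<exists>mu. (\<forall>b\<in>P. pair b mu = 0) \<and> pair a mu \<noteq> 0"
  shows "\<exists>mu. (\<forall>b\<in>P. pair b mu = 0) \<and> (\<forall>a\<in>A. pair a mu \<noteq> 0)"
  using assms
proof (induction A rule: finite_induct)
  case empty
  then show ?case by (intro exI[of _ 0]) (simp add: pair_zero_right)
next
  case (insert x F)
  then obtain mu where mu: "\<forall>b\<in>P. pair b mu = 0" "\<forall>a\<in>F. pair a mu \<noteq> 0" by blast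
  obtain nu where nu: "\<forall>b\<in>P. pair b nu = 0" "pair x nu \<noteq> 0" using insert.prems by blast
  have "finite (\<Union>a\<in>insert x F. {M. pair a mu + M * pair a nu = 0})"
    using insert.hyps(1) mu(2) nu(2) by (intro finite_UN_I) (auto intro!: finite_int_zeros_affine)
  then obtain M where "M \<notin> (\<Union>a\<in>insert x F. {M. pair a mu + M * pair a nu = 0})"
    using ex_new_if_finite[OF infinite_UNIV_int] by blast
  then show ?case
    using mu(1) nu(1) by (intro exI[of _ "mu + M *s nu"]) (auto simp: pair_add_smult_right)
qed

lemma levi_subsystem_separating_cocharacter:
  assumes "levi_subsystem Q Psi" and "finite Q"
  obtains mu where "\<forall>b\<in>Psi. pair b mu = 0" and "\<forall>a\<in>Q - Psi. pair a mu \<noteq> 0"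
proof -
  obtain U where U: "subspace U" "Psi = {a \<in> Q. to_real a \<in> U}"
    using assms(1) unfolding levi_subsystem_def by blast
  then have "span (to_real ` Psi) \<subseteq> U"
    by (intro span_minimal) auto
  then have "\<forall>a\<in>Q - Psi. to_real a \<notin> span (to_real ` Psi)"
    using U(2) by blast
  then have "\<forall>a\<in>Q - Psi. \<exists>mu. (\<forall>b\<in>Psi. pair b mu = 0) \<and> pair a mu \<noteq> 0"
    by (metis separating_cocharacter)
  then show thesis
    using common_separating_cocharacter[of "Q - Psi" Psi] assms(2) that by blast
qed

lemma char_val_mult: "char_val a (x * y) = char_val a x * char_val a y"
  by (simp add: char_val_def times_vec_def power_int_mult_distrib prod.distrib)

lemma power_int_sum:
  fixes c :: "'a::field"
  assumes "c \<noteq> 0"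
  shows "c powi (\<Sum>i\<in>A. f i) = (\<Prod>i\<in>A. c powi f i)"
  by (induction A rule: infinite_finite_induct) (auto simp: power_int_add assms)

lemma char_val_cochar:
  fixes c :: "'k::field"
  assumes "c \<noteq> 0"
  shows "char_val a (cochar mu c) = c powi pair a mu"
  by (simp add: char_val_def cochar_def pair_def power_int_sum assms
      flip: power_int_mult) (simp add: mult.commute)

lemma torus_elt_mult_cochar:
  assumes "torus_elt s" and "c \<noteq> 0"
  shows "torus_elt (s * cochar mu c)"
  using assms by (simp add: torus_elt_def times_vec_def cochar_def)

lemma finite_power_eq:
  fixes z :: "'a::idom"
  assumes "n > 0"
  shows "finite {c. c ^ n = z}"
proof -
  define p where "p = monom (1::'a) n - [:z:]"
  have "coeff p n = 1"
    using assms by (cases n) (auto simp: p_def coeff_monom)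
  then have "finite {c. poly p c = 0}"
    by (intro poly_roots_finite) auto
  then show ?thesis
    by (simp add: p_def poly_monom)
qed

lemma finite_power_int_eq:
  fixes z :: "'a::field"
  assumes "m \<noteq> 0"
  shows "finite {c. c powi m = z}"
proof (cases "m > 0")
  case True
  then have "{c. c powi m = z} = {c. c ^ nat m = z}"
    by (simp add: power_int_def)
  then show ?thesis
    using finite_power_eq[of "nat m" z] True by simp
next
  case False
  then have "{c. c powi m = z} = {c. c ^ nat (- m) = inverse z}"
    using assms by (auto simp: power_int_def power_inverse)
  then show ?thesis
    using finite_power_eq[of "nat (- m)" "inverse z"] False assms by simp
qed

lemma infinite_UNIV_alg_closed: "infinite (UNIV :: 'a::alg_closed_field set)"
proof
  assume fin: "finite (UNIV :: 'a set)"
  define p :: "'a poly" where "p = (\<Prod>x\<in>UNIV. [:-x, 1:]) + 1"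
  have "degree (\<Prod>x\<in>(UNIV::'a set). [:-x, 1:]) = card (UNIV :: 'a set)"
    by (subst degree_prod_eq_sum_degree) auto
  moreover have "card (UNIV :: 'a set) > 0"
    using fin by (simp add: card_gt_0_iff)
  ultimately have "degree p > 0"
    by (simp add: p_def degree_add_eq_left)
  then obtain x where "poly p x = 0"
    using alg_closed_imp_poly_has_root by blast
  moreover have "poly (\<Prod>x\<in>UNIV. [:-x, 1:]) x = 0"
    using fin by (simp add: poly_prod prod_zero_iff)
  ultimately show False
    by (simp add: p_def)
qed

lemma Phi_t_mult_cochar_generic:
  fixes s :: "'k::field ^ 'n"
  assumes "finite R" and "infinite (UNIV :: 'k set)"
  obtains c where "c \<noteq> 0" and "Phi_t R (s * cochar mu c) = {a \<in> Phi_t R s. pair a mu = 0}"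
proof -
  define bad where
    "bad = insert 0 (\<Union>a\<in>{a\<in>R. pair a mu \<noteq> 0}. {c. c powi pair a mu = inverse (char_val a s)})"
  have "finite bad"
    using assms(1) by (auto simp: bad_def intro!: finite_power_int_eq)
  then obtain c where "c \<notin> bad"
    using ex_new_if_finite[OF assms(2)] by blast
  then have "c \<noteq> 0"
    by (simp add: bad_def)
  then have char_val_t: "char_val a (s * cochar mu c) = char_val a s * c powi pair a mu" for a
    by (simp add: char_val_mult char_val_cochar)
  have "char_val a (s * cochar mu c) = 1 \<longleftrightarrow> pair a mu = 0 \<and> char_val a s = 1" if "a \<in> R" for a
  proof (cases "pair a mu = 0")
    case True
    then show ?thesis by (simp add: char_val_t)
  next
    case False
    have "char_val a s * c powi pair a mu \<noteq> 1"
    proof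
      assume "char_val a s * c powi pair a mu = 1"
      then have "c powi pair a mu = inverse (char_val a s)"
        by (simp add: inverse_unique)
      then show False
        using that False \<open>c \<notin> bad\<close> by (auto simp: bad_def)
    qed
    with False show ?thesis by (simp add: char_val_t)
  qed
  then have "Phi_t R (s * cochar mu c) = {a \<in> Phi_t R s. pair a mu = 0}"
    by (auto simp: Phi_t_def)
  with \<open>c \<noteq> 0\<close> show thesis
    by (rule that)
qed

theorem lemma2p1:
  fixes R :: "(int ^ 'n) set" and cor :: "int ^ 'n \<Rightarrow> int ^ 'n"
    and s :: "'k::alg_closed_field ^ 'n" and Psi :: "(int ^ 'n) set"
  assumes "root_datum R cor"
    and "sc_derived R cor"
    and "CHAR('k) > 0"
    and "very_good R cor CHAR('k)"
    and "torus_elt s"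
    and "isolated R (Phi_t R s)"
    and "levi_subsystem (Phi_t R s) Psi"
  shows "\<exists>t::'k ^ 'n. torus_elt t \<and> Phi_t R t = Psi"
proof -
  have "finite R"
    using assms(1) by (simp add: root_datum_def)
  then have "finite (Phi_t R s)"
    by (simp add: Phi_t_def)
  then obtain mu where mu_Psi: "\<forall>b\<in>Psi. pair b mu = 0"
    and mu_rest: "\<forall>a\<in>Phi_t R s - Psi. pair a mu \<noteq> 0"
    using levi_subsystem_separating_cocharacter[OF assms(7)] by blast
  obtain c :: 'k where "c \<noteq> 0"
    and Phi_t_eq: "Phi_t R (s * cochar mu c) = {a \<in> Phi_t R s. pair a mu = 0}"
    using Phi_t_mult_cochar_generic[OF \<open>finite R\<close> infinite_UNIV_alg_closed] by blast
  have "Psi \<subseteq> Phi_t R s"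
    using assms(7) by (auto simp: levi_subsystem_def)
  then have "Phi_t R (s * cochar mu c) = Psi"
    using Phi_t_eq mu_Psi mu_rest by blast
  moreover have "torus_elt (s * cochar mu c)"
    using assms(5) \<open>c \<noteq> 0\<close> by (rule torus_elt_mult_cochar)
  ultimately show ?thesis
    by blast
qed

end
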